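(* Let $\Omega\subset\mathbb R^n$ be open, $\mathbf B:\Omega\to\mathbb R^{d\times d}_{\rm sym}$ a smooth field of positive definite matrices and $r\in\mathbb R\setminus\{-1\}$. Then pointwise in $\Omega$, $\nabla\mathbf B^r\cdot\nabla\mathbf B=\sum_{k=1}^n\Big(\frac{\sinh(r\,\mathsf{Ad}_{\log\mathbf B})\sinh(\mathsf{Ad}_{\log\mathbf B})}{\sinh^2(\frac{r+1}2\mathsf{Ad}_{\log\mathbf B})}\partial_k\mathbf B^{\frac{r+1}2}\Big)\cdot\partial_k\mathbf B^{\frac{r+1}2},$ where the operator is the continuous extension of $z\mapsto\frac{\sinh(rz)\sinh z}{\sinh^2(\frac{r+1}2z)}$ (value $\frac{4r}{(r+1)^2}$ at $z=0$) applied to $\mathsf{Ad}_{\log\mathbf B}$, and $\nabla\mathbf M\cdot\nabla\mathbf N:=\sum_k\partial_k\mathbf M\cdot\partial_k\mathbf N$.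
   Context: $\mathsf{Ad}_{\mathbf G}\mathbf X=\tfrac12(\mathbf G\mathbf X-\mathbf X\mathbf G)$. For symmetric $\mathbf G=\mathbf Q\operatorname{diag}(g_i)\mathbf Q^{\mathsf T}$ ($\mathbf Q$ orthogonal) and a real function $h$, $h(\mathsf{Ad}_{\mathbf G})\mathbf X:=\mathbf Q\big([h(\frac{g_i-g_j}2)]\odot(\mathbf Q^{\mathsf T}\mathbf X\mathbf Q)\big)\mathbf Q^{\mathsf T}$ ($\odot$ entrywise product), removable discontinuities replaced by limits. Matrix powers and logarithm are defined spectrally. $\mathbf A\cdot\mathbf B:=\sum_{i,j}\mathbf A_{ij}\mathbf B_{ij}$. *)

theory Defs
  imports "HOL-Analysis.Analysis"
begin

type_synonym ('d) mat = "real ^ 'd ^ 'd"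

definition diag_mat :: "('d::finite \<Rightarrow> real) \<Rightarrow> real ^ 'd ^ 'd" where
  "diag_mat g = (\<chi> i j. if i = j then g i else 0)"

definition sym_mat :: "real ^ 'd ^ 'd \<Rightarrow> bool" where
  "sym_mat A \<longleftrightarrow> transpose A = A"

definition pos_def :: "real ^ 'd ^ 'd \<Rightarrow> bool" where
  "pos_def A \<longleftrightarrow> sym_mat A \<and> (\<forall>x. x \<noteq> 0 \<longrightarrow> x \<bullet> (A *v x) > 0)"

definition mat_fun :: "(real \<Rightarrow> real) \<Rightarrow> real ^ 'd ^ 'd \<Rightarrow> real ^ 'd ^ 'd" where
  "mat_fun h A = (SOME M. \<exists>Q g. orthogonal_matrix Q \<and> A = Q ** diag_mat g ** transpose Q
                     \<and> M = Q ** diag_mat (\<lambda>i. h (g i)) ** transpose Q)"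

definition mat_pow :: "real \<Rightarrow> real ^ 'd ^ 'd \<Rightarrow> real ^ 'd ^ 'd" where
  "mat_pow r A = mat_fun (\<lambda>t. t powr r) A"

definition mat_log :: "real ^ 'd ^ 'd \<Rightarrow> real ^ 'd ^ 'd" where
  "mat_log A = mat_fun ln A"

definition ad_fun :: "(real \<Rightarrow> real) \<Rightarrow> real ^ 'd ^ 'd \<Rightarrow> real ^ 'd ^ 'd \<Rightarrow> real ^ 'd ^ 'd" where
  "ad_fun h G X = (SOME Y. \<exists>Q g. orthogonal_matrix Q \<and> G = Q ** diag_mat g ** transpose Q
       \<and> Y = Q ** (\<chi> i j. h ((g i - g j) / 2) * (transpose Q ** X ** Q) $ i $ j) ** transpose Q)"

definition frob :: "real ^ 'd ^ 'd \<Rightarrow> real ^ 'd ^ 'd \<Rightarrow> real" (infixl "\<cdot>\<^sub>F" 70) where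
  "A \<cdot>\<^sub>F B = (\<Sum>i\<in>UNIV. \<Sum>j\<in>UNIV. A $ i $ j * B $ i $ j)"

definition partial :: "'n::finite \<Rightarrow> (real ^ 'n \<Rightarrow> 'a::real_normed_vector) \<Rightarrow> real ^ 'n \<Rightarrow> 'a" where
  "partial k f x = vector_derivative (\<lambda>t. f (x + t *\<^sub>R axis k 1)) (at 0)"

definition smooth_on :: "(real ^ 'n::finite) set \<Rightarrow> (real ^ 'n \<Rightarrow> 'a::real_normed_vector) \<Rightarrow> bool" where
  "smooth_on S f \<longleftrightarrow> (\<forall>ks::'n list. continuous_on S (foldr partial ks f)
        \<and> (\<forall>x\<in>S. foldr partial ks f differentiable (at x)))"

definition grad_dot :: "(real ^ 'n::finite \<Rightarrow> real ^ 'd ^ 'd) \<Rightarrow> (real ^ 'n \<Rightarrow> real ^ 'd ^ 'd) \<Rightarrow> real ^ 'n \<Rightarrow> real" where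
  "grad_dot M N x = (\<Sum>k\<in>UNIV. partial k M x \<cdot>\<^sub>F partial k N x)"

definition sinh_ratio :: "real \<Rightarrow> real \<Rightarrow> real" where
  "sinh_ratio r z = (if z = 0 then 4 * r / (r + 1)^2
                     else sinh (r * z) * sinh z / (sinh ((r + 1) / 2 * z))^2)"

end

theory Submission
  imports Defs
begin

text \<open>
  Diagonalise \<open>B(x) = V diag(b) V\<^sup>T\<close>. By the Daleckii--Krein formula, the partial derivatives
  of a spectral function \<open>f(B)\<close> are Schur multipliers in the eigenbasis \<open>V\<close>: the \<open>(i, j)\<close>
  entry of \<open>V\<^sup>T (\<partial>\<^sub>k f(B)) V\<close> is the divided difference \<open>f[b\<^sub>i, b\<^sub>j]\<close> times
  \<open>(V\<^sup>T (\<partial>\<^sub>k B) V)\<^sub>i\<^sub>j\<close>. The operator \<open>h(Ad\<^bsub>log B\<^esub>)\<close> is a Schur multiplier in the same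
  basis, with kernel \<open>h((ln b\<^sub>i - ln b\<^sub>j) / 2)\<close>. Hence both sides of the identity are sums
  \<open>\<Sum>\<^sub>k \<Sum>\<^sub>i\<^sub>j w\<^sub>i\<^sub>j (V\<^sup>T (\<partial>\<^sub>k B) V)\<^sub>i\<^sub>j\<^sup>2\<close>, and it remains to compare the weights, i.e. to
  prove the scalar identity
    \<open>(a\<^sup>r - b\<^sup>r) / (a - b) = sinh(r z) sinh z / sinh\<^sup>2(s z) \<cdot> ((a\<^sup>s - b\<^sup>s) / (a - b))\<^sup>2\<close>
  with \<open>s = (r + 1) / 2\<close> and \<open>z = (ln a - ln b) / 2\<close>; it follows from
  \<open>a\<^sup>t - b\<^sup>t = 2 e\<^sup>t\<^sup>\<mu> sinh(t z)\<close>, \<open>\<mu> = (ln a + ln b) / 2\<close>.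

  The Daleckii--Krein formula rests on the exact identity
  \<open>f(A) - f(B) = \<Sum>\<^sub>j f[A, b\<^sub>j] (A - B) P\<^sub>j\<close>, where \<open>P\<^sub>j\<close> are the eigenprojections of \<open>B\<close>,
  together with the continuity of \<open>A \<mapsto> g(A)\<close> at positive definite matrices, which follows
  from the Weierstrass approximation theorem.
\<close>

lemma orthogonal_matrixD:
  assumes "orthogonal_matrix Q"
  shows "transpose Q ** Q = mat 1" "Q ** transpose Q = mat 1"
  using assms by (simp_all add: orthogonal_matrix_def)

lemma orthogonal_matrix_cancel:
  assumes "orthogonal_matrix Q"
  shows "X ** transpose Q ** Q = X" "X ** Q ** transpose Q = X"
  using assms by (simp_all add: matrix_mul_assoc[symmetric] orthogonal_matrixD)

lemma diag_mat_mult_left: "diag_mat a ** X = (\<chi> i j. a i * X $ i $ j)"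
  by (simp add: vec_eq_iff matrix_matrix_mult_def diag_mat_def if_distrib if_distribR cong: if_cong)

lemma diag_mat_mult_right: "X ** diag_mat b = (\<chi> i j. X $ i $ j * b j)"
  by (simp add: vec_eq_iff matrix_matrix_mult_def diag_mat_def if_distrib if_distribR cong: if_cong)

lemma diag_mat_mult: "diag_mat a ** diag_mat b = diag_mat (\<lambda>i. a i * b i)"
  unfolding diag_mat_mult_left by (simp add: vec_eq_iff diag_mat_def)

lemma matrix_add_rdistrib: "((A::real^'n^'m) + B) ** C = A ** C + B ** C"
  by (simp add: matrix_matrix_mult_def vec_eq_iff distrib_right sum.distrib)

lemma matrix_diff_ldistrib: "(A::real^'n^'m) ** (B - C) = A ** B - A ** C"
  by (simp add: matrix_matrix_mult_def vec_eq_iff right_diff_distrib sum_subtractf)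

lemma matrix_diff_rdistrib: "((A::real^'n^'m) - B) ** C = A ** C - B ** C"
  by (simp add: matrix_matrix_mult_def vec_eq_iff left_diff_distrib sum_subtractf)

lemma matrix_sum_rdistrib: "(\<Sum>j\<in>S. M j) ** (X::real^'n^'m) = (\<Sum>j\<in>S. M j ** X)"
  by (induction S rule: infinite_finite_induct) (simp_all add: matrix_add_rdistrib)

lemma matrix_sum_ldistrib: "(X::real^'n^'m) ** (\<Sum>j\<in>S. M j) = (\<Sum>j\<in>S. X ** M j)"
  by (induction S rule: infinite_finite_induct) (simp_all add: matrix_add_ldistrib)

lemma matrix_scaleR_right: "(A::real^'n^'m) ** (c *\<^sub>R B) = c *\<^sub>R (A ** B)"
  by (simp add: matrix_matrix_mult_def vec_eq_iff sum_distrib_left mult.left_commute)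

lemma matrix_triple_product_entry:
  "(W ** M ** transpose V) $ a $ b = (\<Sum>i\<in>UNIV. \<Sum>j\<in>UNIV. W $ a $ i * M $ i $ j * V $ b $ j)"
proof -
  have "(W ** M ** transpose V) $ a $ b = (\<Sum>j\<in>UNIV. (\<Sum>i\<in>UNIV. W $ a $ i * M $ i $ j) * V $ b $ j)"
    by (simp add: matrix_matrix_mult_def transpose_def)
  also have "\<dots> = (\<Sum>j\<in>UNIV. \<Sum>i\<in>UNIV. W $ a $ i * M $ i $ j * V $ b $ j)"
    by (simp add: sum_distrib_right)
  also have "\<dots> = (\<Sum>i\<in>UNIV. \<Sum>j\<in>UNIV. W $ a $ i * M $ i $ j * V $ b $ j)"
    by (rule sum.swap)
  finally show ?thesis .
qed

lemma orthogonal_conj_cancel: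
  fixes U V X Y :: "real^'d^'d"
  assumes "orthogonal_matrix U" "orthogonal_matrix V"
    and "transpose U ** X ** V = transpose U ** Y ** V"
  shows "X = Y"
proof -
  have "Z = U ** (transpose U ** Z ** V) ** transpose V" for Z
    using assms(1,2) by (simp add: matrix_mul_assoc orthogonal_matrixD)
       (simp add: matrix_mul_assoc[symmetric] orthogonal_matrixD)
  then show ?thesis using assms(3) by metis
qed

lemma frob_eq_inner: "A \<cdot>\<^sub>F B = A \<bullet> B"
  by (simp add: frob_def inner_vec_def)

lemma frob_eq_trace: "(A::real^'d^'d) \<cdot>\<^sub>F B = trace (transpose A ** B)"
proof -
  have "trace (transpose A ** B) = (\<Sum>j\<in>UNIV. \<Sum>i\<in>UNIV. A $ i $ j * B $ i $ j)"
    by (simp add: trace_def matrix_matrix_mult_def transpose_def)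
  also have "\<dots> = A \<cdot>\<^sub>F B"
    unfolding frob_def by (rule sum.swap)
  finally show ?thesis ..
qed

lemma frob_orthogonal_conj:
  fixes V X Y :: "real^'d^'d"
  assumes "orthogonal_matrix V"
  shows "(transpose V ** X ** V) \<cdot>\<^sub>F (transpose V ** Y ** V) = X \<cdot>\<^sub>F Y"
proof -
  have "transpose (transpose V ** X ** V) ** (transpose V ** Y ** V)
      = transpose V ** (transpose X ** Y ** V)"
    using assms by (simp add: matrix_transpose_mul matrix_mul_assoc)
      (simp add: matrix_mul_assoc[symmetric] orthogonal_matrixD)
  then have "(transpose V ** X ** V) \<cdot>\<^sub>F (transpose V ** Y ** V)
      = trace (transpose V ** (transpose X ** Y ** V))"
    by (simp only: frob_eq_trace)
  also have "\<dots> = trace (transpose X ** Y ** V ** transpose V)"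
    by (rule trace_mul_sym)
  also have "transpose X ** Y ** V ** transpose V = transpose X ** Y"
    using assms by (simp add: matrix_mul_assoc[symmetric] orthogonal_matrixD)
  finally show ?thesis by (simp only: frob_eq_trace)
qed

lemma norm_orthogonal_conj:
  fixes U X :: "real^'d^'d"
  assumes "orthogonal_matrix U"
  shows "norm (U ** X ** transpose U) = norm X"
proof -
  have "transpose U ** (U ** X ** transpose U) ** U = X"
    using assms by (simp add: matrix_mul_assoc orthogonal_matrixD)
      (simp add: matrix_mul_assoc[symmetric] orthogonal_matrixD)
  then have "(norm (U ** X ** transpose U))\<^sup>2 = (norm X)\<^sup>2"
    using frob_orthogonal_conj[OF assms, of "U ** X ** transpose U" "U ** X ** transpose U"]
    by (simp add: power2_norm_eq_inner frob_eq_inner)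
  then show ?thesis by simp
qed

lemma norm_diag_mat_le: "norm (diag_mat d) \<le> (\<Sum>i\<in>UNIV. \<bar>d i\<bar>)"
proof -
  have "diag_mat d $ i = d i *\<^sub>R axis i 1" for i
    by (simp add: diag_mat_def vec_eq_iff axis_def)
  then have "norm (diag_mat d) = L2_set (\<lambda>i. \<bar>d i\<bar>) UNIV"
    by (simp only: norm_vec_def[of "diag_mat d"]) simp
  then show ?thesis using L2_set_le_sum_abs[of "\<lambda>i. \<bar>d i\<bar>" UNIV] by simp
qed

section \<open>Spectral theorem for symmetric matrices\<close>

lemma sym_mat_inner_mult:
  fixes A :: "real^'d^'d"
  assumes "sym_mat A"
  shows "x \<bullet> (A *v y) = (A *v x) \<bullet> y"
proof -
  have "x \<bullet> (A *v y) = (x v* A) \<bullet> y" by (simp add: dot_lmul_matrix)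
  also have "x v* A = transpose A *v x" by simp
  also have "transpose A = A" using assms by (simp add: sym_mat_def)
  finally show ?thesis .
qed

lemma linear_le_quadratic_imp_zero:
  fixes c K :: real
  assumes "\<And>t. 2 * t * c \<le> t\<^sup>2 * K"
  shows "c = 0"
proof (rule ccontr)
  assume "c \<noteq> 0"
  define a where "a = \<bar>K\<bar> + 1"
  have "a > 0" unfolding a_def by simp
  have pos: "(c / a)\<^sup>2 > 0" using \<open>c \<noteq> 0\<close> \<open>a > 0\<close> by simp
  have "2 * (c / a) * c \<le> (c / a)\<^sup>2 * K" by (rule assms)
  also have "\<dots> \<le> (c / a)\<^sup>2 * \<bar>K\<bar>" by (simp add: mult_left_mono)
  also have "\<dots> < (c / a)\<^sup>2 * a" using pos unfolding a_def by (intro mult_strict_left_mono) auto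
  also have "\<dots> = (c / a) * c" using \<open>a > 0\<close> by (simp add: power2_eq_square)
  finally have "2 * (c / a) * c < (c / a) * c" .
  moreover have "(c / a) * c > 0"
    using \<open>c \<noteq> 0\<close> \<open>a > 0\<close> by (simp add: field_simps) (metis not_real_square_gt_zero)
  ultimately show False by linarith
qed

text \<open>Perturbing the maximiser \<open>u\<close> to \<open>u + t y\<close> gives \<open>2 t (y \<bullet> A u) \<le> K t\<^sup>2\<close> for all \<open>t\<close>.\<close>
lemma max_quadratic_form_orthogonal:
  fixes A :: "real^'d^'d"
  assumes sym: "sym_mat A" and S: "subspace S" and u: "u \<in> S" "norm u = 1"
    and max: "\<And>v. v \<in> S \<Longrightarrow> norm v = 1 \<Longrightarrow> v \<bullet> (A *v v) \<le> u \<bullet> (A *v u)"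
    and y: "y \<in> S" "y \<bullet> u = 0"
  shows "y \<bullet> (A *v u) = 0"
proof (rule linear_le_quadratic_imp_zero)
  fix t :: real
  define l where "l = u \<bullet> (A *v u)"
  define w where "w = u + t *\<^sub>R y"
  have uu: "u \<bullet> u = 1" using u by (simp add: dot_square_norm)
  have ww: "w \<bullet> w = 1 + t\<^sup>2 * (y \<bullet> y)"
    unfolding w_def using y uu by (simp add: inner_add inner_commute power2_eq_square algebra_simps)
  then have "w \<bullet> w > 0" by (simp add: add_pos_nonneg)
  then have "norm w > 0" by (simp add: inner_gt_zero_iff)
  moreover have "w /\<^sub>R norm w \<in> S" unfolding w_def using S u y by (simp add: subspace_add subspace_scale)
  ultimately have "(w /\<^sub>R norm w) \<bullet> (A *v (w /\<^sub>R norm w)) \<le> l"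
    unfolding l_def by (intro max) auto
  moreover have "(w /\<^sub>R norm w) \<bullet> (A *v (w /\<^sub>R norm w)) = (w \<bullet> (A *v w)) / (w \<bullet> w)"
    by (simp add: matrix_vector_mult_scaleR dot_square_norm power2_eq_square divide_inverse algebra_simps)
  ultimately have "w \<bullet> (A *v w) \<le> l * (w \<bullet> w)"
    using \<open>norm w > 0\<close> by (simp add: divide_le_eq dot_square_norm)
  moreover have "u \<bullet> (A *v y) = y \<bullet> (A *v u)"
    using sym_mat_inner_mult[OF sym, of u y] by (simp add: inner_commute)
  then have "w \<bullet> (A *v w) = l + 2 * t * (y \<bullet> (A *v u)) + t\<^sup>2 * (y \<bullet> (A *v y))"
    unfolding w_def l_def
    by (simp add: matrix_vector_right_distrib matrix_vector_mult_scaleR inner_add inner_commute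
        power2_eq_square algebra_simps)
  ultimately show "2 * t * (y \<bullet> (A *v u)) \<le> t\<^sup>2 * (l * (y \<bullet> y) - y \<bullet> (A *v y))"
    unfolding ww by (simp add: algebra_simps)
qed

lemma invariant_subspace_unit_eigenvector:
  fixes A :: "real^'d^'d"
  assumes sym: "sym_mat A" and S: "subspace S" "\<forall>x\<in>S. A *v x \<in> S" and x: "x \<in> S" "x \<noteq> 0"
  obtains u where "u \<in> S" "norm u = 1" "A *v u = (u \<bullet> (A *v u)) *\<^sub>R u"
proof -
  define T where "T = sphere (0::real^'d) 1 \<inter> S"
  have "compact T" unfolding T_def
    by (rule compact_Int_closed[OF compact_sphere closed_subspace[OF S(1)]])
  moreover have "x /\<^sub>R norm x \<in> T" unfolding T_def using x S(1) by (simp add: subspace_scale)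
  then have "T \<noteq> {}" by auto
  moreover have "continuous_on T (\<lambda>y. y \<bullet> (A *v y))" by (intro continuous_intros)
  ultimately obtain u where "u \<in> T" and umax: "\<forall>y\<in>T. y \<bullet> (A *v y) \<le> u \<bullet> (A *v u)"
    using continuous_attains_sup by blast
  then have uS: "u \<in> S" and nu: "norm u = 1" unfolding T_def by auto
  have uu: "u \<bullet> u = 1" using nu by (simp add: dot_square_norm)
  define v where "v = A *v u - (u \<bullet> (A *v u)) *\<^sub>R u"
  have "v \<in> S" unfolding v_def using S uS by (simp add: subspace_diff subspace_scale)
  moreover have vu: "v \<bullet> u = 0"
    unfolding v_def using uu by (simp add: inner_diff_left inner_commute[of "A *v u" u])
  ultimately have "v \<bullet> (A *v u) = 0"
    using max_quadratic_form_orthogonal[OF sym S(1) uS nu] umax T_def by auto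
  then have "v \<bullet> v = 0" using vu unfolding v_def by (simp add: inner_diff_right)
  then have "A *v u = (u \<bullet> (A *v u)) *\<^sub>R u" unfolding v_def by simp
  with uS nu that show ?thesis by blast
qed

lemma invariant_subspace_orthonormal_eigenvectors:
  fixes A :: "real^'d^'d"
  assumes sym: "sym_mat A" and "subspace S" "\<forall>x\<in>S. A *v x \<in> S"
  shows "\<exists>E. E \<subseteq> S \<and> pairwise orthogonal E \<and>
     (\<forall>e\<in>E. norm e = 1 \<and> A *v e = (e \<bullet> (A *v e)) *\<^sub>R e) \<and> S \<subseteq> span E"
  using assms(2,3)
proof (induction "dim S" arbitrary: S rule: less_induct)
  case less
  show ?case
  proof (cases "S \<subseteq> {0}")
    case True
    then show ?thesis by (intro exI[of _ "{}"]) auto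
  next
    case False
    then obtain u where uS: "u \<in> S" and nu: "norm u = 1" and eig: "A *v u = (u \<bullet> (A *v u)) *\<^sub>R u"
      using invariant_subspace_unit_eigenvector[OF sym less.prems] by blast
    have uu: "u \<bullet> u = 1" using nu by (simp add: dot_square_norm)
    define S' where "S' = {y \<in> S. y \<bullet> u = 0}"
    have sub': "subspace S'" using less.prems(1) unfolding S'_def subspace_def
      by (auto simp: inner_add_left)
    have inv': "\<forall>y\<in>S'. A *v y \<in> S'"
    proof
      fix y assume y: "y \<in> S'"
      have "(A *v y) \<bullet> u = y \<bullet> (A *v u)" using sym_mat_inner_mult[OF sym, of y u] by simp
      also have "\<dots> = 0" using y unfolding S'_def by (subst eig) simp
      finally show "A *v y \<in> S'" using y less.prems(2) unfolding S'_def by auto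
    qed
    have "u \<notin> S'" using uu unfolding S'_def by auto
    then have "S' \<subset> S" using uS unfolding S'_def by blast
    then have "dim S' < dim S"
      using dim_psubset sub' less.prems(1) by (metis span_eq_iff)
    then obtain E' where E': "E' \<subseteq> S'" "pairwise orthogonal E'"
       "\<forall>e\<in>E'. norm e = 1 \<and> A *v e = (e \<bullet> (A *v e)) *\<^sub>R e" "S' \<subseteq> span E'"
      using less.hyps[OF _ sub' inv'] by blast
    have "S \<subseteq> span (insert u E')"
    proof
      fix z assume "z \<in> S"
      then have "z - (z \<bullet> u) *\<^sub>R u \<in> S'" unfolding S'_def using uS less.prems(1) uu
        by (simp add: subspace_diff subspace_scale inner_diff_left)
      then have "z - (z \<bullet> u) *\<^sub>R u \<in> span (insert u E')"
        using E'(4) span_mono[of E' "insert u E'"] by blast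
      moreover have "(z \<bullet> u) *\<^sub>R u \<in> span (insert u E')" by (simp add: span_base span_mul)
      ultimately show "z \<in> span (insert u E')" using span_add by fastforce
    qed
    moreover have "pairwise orthogonal (insert u E')"
      unfolding pairwise_insert using E'(1,2) unfolding S'_def orthogonal_def
      by (auto simp: inner_commute)
    ultimately show ?thesis using E' uS nu eig unfolding S'_def
      by (intro exI[of _ "insert u E'"]) auto
  qed
qed

lemma sym_mat_diagonalization:
  fixes A :: "real^'d^'d"
  assumes "sym_mat A"
  obtains Q g where "orthogonal_matrix Q" "A = Q ** diag_mat g ** transpose Q"
proof -
  obtain E where E: "pairwise orthogonal E"
     "\<forall>e\<in>E. norm e = 1 \<and> A *v e = (e \<bullet> (A *v e)) *\<^sub>R e" "UNIV \<subseteq> span E"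
    using invariant_subspace_orthonormal_eigenvectors[OF assms, of UNIV] by auto
  have ind: "independent E" using pairwise_orthogonal_independent[OF E(1)] E(2) by force
  then have "card E = dim (span E)" using dim_eq_card_independent[OF ind] by (simp add: dim_span)
  also have "span E = UNIV" using E(3) by auto
  finally have "card E = CARD('d)" by simp
  then obtain \<phi> where phi: "bij_betw \<phi> (UNIV::'d set) E"
    using finite_same_card_bij[of "UNIV::'d set" E] finiteI_independent[OF ind] by auto
  then have phiE: "\<phi> j \<in> E" and inj: "inj \<phi>" for j by (auto simp: bij_betw_def)
  define Q :: "real^'d^'d" where "Q = (\<chi> i j. \<phi> j $ i)"
  define g where "g j = \<phi> j \<bullet> (A *v \<phi> j)" for j
  have "\<phi> j \<bullet> \<phi> k = (if j = k then 1 else 0)" for j k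
    using E(1,2) phiE[of j] phiE[of k] inj[THEN injD, of j k]
    by (auto simp: dot_square_norm pairwise_def orthogonal_def)
  then have "transpose Q ** Q = mat 1"
    by (simp add: vec_eq_iff matrix_matrix_mult_def transpose_def Q_def mat_def inner_vec_def)
  then have orth: "orthogonal_matrix Q" by (simp add: orthogonal_matrix)
  have eig: "A *v \<phi> j = g j *\<^sub>R \<phi> j" for j using E(2) phiE[of j] g_def by auto
  have "(A ** Q) $ i $ j = (Q ** diag_mat g) $ i $ j" for i j
  proof -
    have "(A ** Q) $ i $ j = (A *v \<phi> j) $ i"
      by (simp add: matrix_matrix_mult_def matrix_vector_mult_def Q_def)
    also have "\<dots> = g j * \<phi> j $ i" using eig by simp
    finally show ?thesis by (simp add: diag_mat_mult_right Q_def)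
  qed
  then have "A ** Q = Q ** diag_mat g" by (simp add: vec_eq_iff)
  then have "A = Q ** diag_mat g ** transpose Q"
    using orthogonal_matrixD(2)[OF orth] by (metis matrix_mul_assoc matrix_mul_rid)
  with orth that show ?thesis by blast
qed

section \<open>Schur multipliers\<close>

text \<open>Both \<open>mat_fun h\<close> (kernel \<open>\<lambda>a b. h a\<close>, applied to \<open>mat 1\<close>) and \<open>ad_fun h\<close>
  (kernel \<open>\<lambda>a b. h ((a - b) / 2)\<close>) are Schur multipliers in an eigenbasis.\<close>
definition schur_mult ::
    "(real \<Rightarrow> real \<Rightarrow> real) \<Rightarrow> real^'d^'d \<Rightarrow> ('d \<Rightarrow> real) \<Rightarrow> real^'d^'d \<Rightarrow> real^'d^'d" where
  "schur_mult F Q g X = Q ** (\<chi> i j. F (g i) (g j) * (transpose Q ** X ** Q) $ i $ j) ** transpose Q"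

lemma schur_mult_conj:
  assumes "orthogonal_matrix Q"
  shows "transpose Q ** schur_mult F Q g X ** Q = (\<chi> i j. F (g i) (g j) * (transpose Q ** X ** Q) $ i $ j)"
  using assms unfolding schur_mult_def
  by (simp add: matrix_mul_assoc orthogonal_matrixD) (simp add: matrix_mul_assoc[symmetric] orthogonal_matrixD)

lemma diag_mat_intertwining:
  assumes "W ** diag_mat g1 = diag_mat g2 ** W" and "W $ a $ i \<noteq> 0"
  shows "g2 a = g1 i"
proof -
  have "(W ** diag_mat g1) $ a $ i = (diag_mat g2 ** W) $ a $ i" using assms(1) by simp
  then have "W $ a $ i * g1 i = g2 a * W $ a $ i" by (simp add: diag_mat_mult_left diag_mat_mult_right)
  then show ?thesis using assms(2) by simp
qed

text \<open>Two eigendecompositions of the same matrix are related by \<open>W = Q\<^sub>2\<^sup>T Q\<^sub>1\<close>, which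
  intertwines the diagonal factors.\<close>
lemma schur_mult_decomposition_indep:
  fixes Q1 Q2 :: "real^'d^'d"
  assumes o1: "orthogonal_matrix Q1" and o2: "orthogonal_matrix Q2"
    and eq: "Q1 ** diag_mat g1 ** transpose Q1 = Q2 ** diag_mat g2 ** transpose Q2"
  shows "schur_mult F Q1 g1 X = schur_mult F Q2 g2 X"
proof -
  note a1 = orthogonal_matrixD[OF o1] and a2 = orthogonal_matrixD[OF o2]
  define W where "W = transpose Q2 ** Q1"
  have "transpose Q2 ** (Q1 ** diag_mat g1 ** transpose Q1) ** Q1 = W ** diag_mat g1"
    unfolding W_def by (simp add: matrix_mul_assoc[symmetric] a1)
  moreover have "transpose Q2 ** (Q2 ** diag_mat g2 ** transpose Q2) ** Q1 = diag_mat g2 ** W"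
    unfolding W_def by (simp add: matrix_mul_assoc a2)
  ultimately have "W ** diag_mat g1 = diag_mat g2 ** W" using eq by simp
  note Wg = diag_mat_intertwining[OF this]
  define Z where "Z = transpose Q1 ** X ** Q1"
  define M1 where "M1 = (\<chi> i j. F (g1 i) (g1 j) * Z $ i $ j)"
  define M2 where "M2 = (\<chi> i j. F (g2 i) (g2 j) * (transpose Q2 ** X ** Q2) $ i $ j)"
  have WZ: "W ** Z ** transpose W = transpose Q2 ** X ** Q2"
  proof -
    have "W ** Z ** transpose W = transpose Q2 ** (Q1 ** transpose Q1) ** X ** (Q1 ** transpose Q1) ** Q2"
      unfolding W_def Z_def by (simp add: matrix_transpose_mul matrix_mul_assoc)
    then show ?thesis using a1 by simp
  qed
  have "(W ** M1 ** transpose W) $ a $ b = M2 $ a $ b" for a b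
  proof -
    have "(W ** M1 ** transpose W) $ a $ b = (\<Sum>i\<in>UNIV. \<Sum>j\<in>UNIV. W $ a $ i * M1 $ i $ j * W $ b $ j)"
      by (rule matrix_triple_product_entry)
    also have "\<dots> = (\<Sum>i\<in>UNIV. \<Sum>j\<in>UNIV. F (g2 a) (g2 b) * (W $ a $ i * Z $ i $ j * W $ b $ j))"
    proof (intro sum.cong refl)
      fix i j
      show "W $ a $ i * M1 $ i $ j * W $ b $ j = F (g2 a) (g2 b) * (W $ a $ i * Z $ i $ j * W $ b $ j)"
        using Wg[of a i] Wg[of b j] unfolding M1_def by (cases "W $ a $ i = 0 \<or> W $ b $ j = 0") auto
    qed
    also have "\<dots> = F (g2 a) (g2 b) * (W ** Z ** transpose W) $ a $ b"
      by (simp add: matrix_triple_product_entry sum_distrib_left)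
    also have "\<dots> = M2 $ a $ b" unfolding M2_def WZ by simp
    finally show ?thesis .
  qed
  then have WM: "W ** M1 ** transpose W = M2" by (simp add: vec_eq_iff)
  have "schur_mult F Q1 g1 X = (Q2 ** transpose Q2) ** (Q1 ** M1 ** transpose Q1) ** (Q2 ** transpose Q2)"
    using a2 unfolding schur_mult_def M1_def Z_def by simp
  also have "\<dots> = Q2 ** (W ** M1 ** transpose W) ** transpose Q2"
    unfolding W_def by (simp add: matrix_transpose_mul matrix_mul_assoc)
  finally show ?thesis unfolding WM M2_def schur_mult_def .
qed

lemma mat_fun_eq_diag:
  fixes Q :: "real^'d^'d"
  assumes "orthogonal_matrix Q" and "A = Q ** diag_mat g ** transpose Q"
  shows "mat_fun h A = Q ** diag_mat (\<lambda>i. h (g i)) ** transpose Q"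
proof -
  have diag: "schur_mult (\<lambda>a b. h a) Q' g' (mat 1) = Q' ** diag_mat (\<lambda>i. h (g' i)) ** transpose Q'"
    if "orthogonal_matrix Q'" for Q' :: "real^'d^'d" and g'
  proof -
    have "transpose Q' ** mat 1 ** Q' = mat 1" using orthogonal_matrixD(1)[OF that] by simp
    then have "(\<chi> i j. h (g' i) * (transpose Q' ** mat 1 ** Q') $ i $ j) = diag_mat (\<lambda>i. h (g' i))"
      by (simp add: diag_mat_def mat_def vec_eq_iff)
    then show ?thesis by (simp add: schur_mult_def)
  qed
  obtain Q' g' where Q': "orthogonal_matrix Q'" "A = Q' ** diag_mat g' ** transpose Q'"
     "mat_fun h A = Q' ** diag_mat (\<lambda>i. h (g' i)) ** transpose Q'"
    using someI_ex[of "\<lambda>M. \<exists>Q g. orthogonal_matrix Q \<and> A = Q ** diag_mat g ** transpose Q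
        \<and> M = Q ** diag_mat (\<lambda>i. h (g i)) ** transpose Q"] assms
    unfolding mat_fun_def by blast
  have "Q' ** diag_mat g' ** transpose Q' = Q ** diag_mat g ** transpose Q"
    using Q'(2) assms(2) by (rule trans[OF sym])
  then show ?thesis
    using schur_mult_decomposition_indep[OF Q'(1) assms(1), where F = "\<lambda>a b. h a" and X = "mat 1"]
      diag[OF Q'(1)] diag[OF assms(1)] Q'(3) by simp
qed

lemma ad_fun_eq_schur_mult:
  fixes Q :: "real^'d^'d"
  assumes "orthogonal_matrix Q" and "G = Q ** diag_mat g ** transpose Q"
  shows "ad_fun h G X = schur_mult (\<lambda>a b. h ((a - b) / 2)) Q g X"
proof -
  obtain Q' g' where Q': "orthogonal_matrix Q'" "G = Q' ** diag_mat g' ** transpose Q'"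
     "ad_fun h G X = schur_mult (\<lambda>a b. h ((a - b) / 2)) Q' g' X"
    using someI_ex[of "\<lambda>Y. \<exists>Q g. orthogonal_matrix Q \<and> G = Q ** diag_mat g ** transpose Q
       \<and> Y = Q ** (\<chi> i j. h ((g i - g j) / 2) * (transpose Q ** X ** Q) $ i $ j) ** transpose Q"] assms
    unfolding ad_fun_def schur_mult_def by blast
  have "Q' ** diag_mat g' ** transpose Q' = Q ** diag_mat g ** transpose Q"
    using Q'(2) assms(2) by (rule trans[OF sym])
  then show ?thesis using schur_mult_decomposition_indep[OF Q'(1) assms(1)] Q'(3) by simp
qed

lemma ad_fun_mat_log:
  fixes V :: "real^'d^'d"
  assumes "orthogonal_matrix V" and "A = V ** diag_mat b ** transpose V"
  shows "ad_fun h (mat_log A) X = schur_mult (\<lambda>a c. h ((ln a - ln c) / 2)) V b X"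
proof -
  have "mat_log A = V ** diag_mat (\<lambda>i. ln (b i)) ** transpose V"
    unfolding mat_log_def using mat_fun_eq_diag[OF assms] .
  then show ?thesis using ad_fun_eq_schur_mult[OF assms(1)] by (simp add: schur_mult_def)
qed

lemma schur_mult_one:
  assumes "orthogonal_matrix Q"
  shows "schur_mult (\<lambda>_ _. 1) Q g X = X"
  using assms unfolding schur_mult_def
  by (simp add: matrix_mul_assoc orthogonal_matrixD) (simp add: matrix_mul_assoc[symmetric] orthogonal_matrixD)

lemma schur_mult_schur_mult:
  assumes "orthogonal_matrix Q"
  shows "schur_mult F Q g (schur_mult G Q g X) = schur_mult (\<lambda>a b. F a b * G a b) Q g X"
  using schur_mult_conj[OF assms, of G g X] unfolding schur_mult_def by (simp add: mult.assoc)

lemma frob_schur_mult: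
  assumes "orthogonal_matrix Q"
  shows "schur_mult F Q g X \<cdot>\<^sub>F schur_mult G Q g X
    = (\<Sum>i\<in>UNIV. \<Sum>j\<in>UNIV. F (g i) (g j) * G (g i) (g j) * ((transpose Q ** X ** Q) $ i $ j)\<^sup>2)"
  using frob_orthogonal_conj[OF assms, of "schur_mult F Q g X" "schur_mult G Q g X"]
  unfolding schur_mult_conj[OF assms] frob_def by (simp add: power2_eq_square mult_ac)

section \<open>Continuity of the functional calculus\<close>

lemma mat_fun_id:
  fixes A :: "real^'d^'d"
  assumes "sym_mat A"
  shows "mat_fun (\<lambda>x. x) A = A"
proof -
  obtain U a where "orthogonal_matrix U" "A = U ** diag_mat a ** transpose U"
    using sym_mat_diagonalization[OF assms] .
  then show ?thesis using mat_fun_eq_diag[of U A a "\<lambda>x. x"] by simp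
qed

lemma mat_fun_const:
  fixes A :: "real^'d^'d"
  assumes "sym_mat A"
  shows "mat_fun (\<lambda>x. c) A = c *\<^sub>R mat 1"
proof -
  obtain U a where U: "orthogonal_matrix U" "A = U ** diag_mat a ** transpose U"
    using sym_mat_diagonalization[OF assms] .
  have "diag_mat (\<lambda>i. c) = (c *\<^sub>R mat 1 :: real^'d^'d)" by (simp add: diag_mat_def mat_def vec_eq_iff)
  then have "mat_fun (\<lambda>x. c) A = c *\<^sub>R (U ** transpose U)"
    using mat_fun_eq_diag[OF U] by (simp add: matrix_scalar_ac scalar_matrix_assoc)
  then show ?thesis using orthogonal_matrixD(2)[OF U(1)] by simp
qed

lemma mat_fun_add:
  fixes A :: "real^'d^'d"
  assumes "sym_mat A"
  shows "mat_fun (\<lambda>x. f x + g x) A = mat_fun f A + mat_fun g A"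
proof -
  obtain U a where U: "orthogonal_matrix U" "A = U ** diag_mat a ** transpose U"
    using sym_mat_diagonalization[OF assms] .
  have "diag_mat (\<lambda>i. f (a i) + g (a i)) = diag_mat (\<lambda>i. f (a i)) + diag_mat (\<lambda>i. g (a i))"
    by (simp add: diag_mat_def vec_eq_iff)
  then show ?thesis unfolding mat_fun_eq_diag[OF U] by (simp add: matrix_add_ldistrib matrix_add_rdistrib)
qed

lemma mat_fun_mult:
  fixes A :: "real^'d^'d"
  assumes "sym_mat A"
  shows "mat_fun (\<lambda>x. f x * g x) A = mat_fun f A ** mat_fun g A"
proof -
  obtain U a where U: "orthogonal_matrix U" "A = U ** diag_mat a ** transpose U"
    using sym_mat_diagonalization[OF assms] .
  have "mat_fun f A ** mat_fun g A
      = U ** diag_mat (\<lambda>i. f (a i)) ** (transpose U ** U) ** diag_mat (\<lambda>i. g (a i)) ** transpose U"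
    unfolding mat_fun_eq_diag[OF U] by (simp add: matrix_mul_assoc)
  also have "\<dots> = U ** (diag_mat (\<lambda>i. f (a i)) ** diag_mat (\<lambda>i. g (a i))) ** transpose U"
    using orthogonal_matrixD(1)[OF U(1)] by (simp add: matrix_mul_assoc)
  finally show ?thesis unfolding mat_fun_eq_diag[OF U] diag_mat_mult by simp
qed

lemma tendsto_matrix_mult:
  fixes X Y :: "'a \<Rightarrow> real^'d^'d"
  assumes "(X \<longlongrightarrow> A) F" "(Y \<longlongrightarrow> B) F"
  shows "((\<lambda>t. X t ** Y t) \<longlongrightarrow> A ** B) F"
  unfolding matrix_matrix_mult_def by (intro tendsto_intros assms)

lemma tendsto_mat_fun_polynomial:
  fixes C :: "'a \<Rightarrow> real^'d^'d"
  assumes "real_polynomial_function p" and B: "sym_mat B"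
    and sym: "eventually (\<lambda>t. sym_mat (C t)) F" and C: "(C \<longlongrightarrow> B) F"
  shows "((\<lambda>t. mat_fun p (C t)) \<longlongrightarrow> mat_fun p B) F"
  using assms(1)
proof (induction p rule: real_polynomial_function.induct)
  case (linear f)
  then obtain c where f: "f = (\<lambda>x. x * c)" using real_bounded_linear by blast
  have eq: "mat_fun (\<lambda>x. x * c) A = A ** (c *\<^sub>R mat 1)" if "sym_mat A" for A :: "real^'d^'d"
    using mat_fun_mult[OF that, of "\<lambda>x. x" "\<lambda>x. c"] mat_fun_id[OF that] mat_fun_const[OF that] by simp
  have "((\<lambda>t. C t ** (c *\<^sub>R mat 1)) \<longlongrightarrow> mat_fun f B) F"
    unfolding f eq[OF B] by (intro tendsto_matrix_mult C tendsto_const)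
  moreover have "eventually (\<lambda>t. C t ** (c *\<^sub>R mat 1) = mat_fun f (C t)) F"
    using sym by eventually_elim (simp add: f eq)
  ultimately show ?case by (rule Lim_transform_eventually)
next
  case (const c)
  have "eventually (\<lambda>t. mat_fun (\<lambda>x. c) B = mat_fun (\<lambda>x. c) (C t)) F"
    using sym by eventually_elim (simp add: mat_fun_const B)
  then show ?case by (rule Lim_transform_eventually[OF tendsto_const])
next
  case (add f g)
  have "((\<lambda>t. mat_fun f (C t) + mat_fun g (C t)) \<longlongrightarrow> mat_fun (\<lambda>x. f x + g x) B) F"
    unfolding mat_fun_add[OF B] by (intro tendsto_add add.IH)
  moreover have "eventually (\<lambda>t. mat_fun f (C t) + mat_fun g (C t) = mat_fun (\<lambda>x. f x + g x) (C t)) F"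
    using sym by eventually_elim (simp add: mat_fun_add)
  ultimately show ?case by (rule Lim_transform_eventually)
next
  case (mult f g)
  have "((\<lambda>t. mat_fun f (C t) ** mat_fun g (C t)) \<longlongrightarrow> mat_fun (\<lambda>x. f x * g x) B) F"
    unfolding mat_fun_mult[OF B] by (intro tendsto_matrix_mult mult.IH)
  moreover have "eventually (\<lambda>t. mat_fun f (C t) ** mat_fun g (C t) = mat_fun (\<lambda>x. f x * g x) (C t)) F"
    using sym by eventually_elim (simp add: mat_fun_mult)
  ultimately show ?case by (rule Lim_transform_eventually)
qed

lemma orthogonal_diag_eigenvalue:
  fixes U :: "real^'d^'d"
  assumes U: "orthogonal_matrix U" and A: "A = U ** diag_mat a ** transpose U"
  shows "norm (column k U) = 1" and "a k = column k U \<bullet> (A *v column k U)"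
proof -
  show norm: "norm (column k U) = 1" using U by (simp add: orthogonal_matrix_orthonormal_columns)
  have "A ** U = U ** diag_mat a ** (transpose U ** U)" unfolding A by (simp add: matrix_mul_assoc)
  then have AU: "A ** U = U ** diag_mat a" using orthogonal_matrixD(1)[OF U] by simp
  have "(A *v column k U) $ i = (a k *\<^sub>R column k U) $ i" for i
  proof -
    have "(A *v column k U) $ i = (A ** U) $ i $ k"
      by (simp add: matrix_vector_mult_def matrix_matrix_mult_def column_def)
    then show ?thesis unfolding AU diag_mat_mult_right by (simp add: column_def)
  qed
  then have "A *v column k U = a k *\<^sub>R column k U" by (simp add: vec_eq_iff)
  then show "a k = column k U \<bullet> (A *v column k U)" using norm by (simp add: dot_square_norm)
qed

lemma pos_def_eigenvalue_pos:
  fixes U :: "real^'d^'d"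
  assumes "pos_def A" "orthogonal_matrix U" "A = U ** diag_mat a ** transpose U"
  shows "0 < a k"
proof -
  have "column k U \<noteq> 0" using orthogonal_diag_eigenvalue(1)[OF assms(2,3), where k = k] by auto
  then show ?thesis
    using assms(1) orthogonal_diag_eigenvalue(2)[OF assms(2,3)] by (simp add: pos_def_def)
qed

lemma quadratic_form_bound:
  fixes E :: "real^'d^'d"
  shows "\<bar>u \<bullet> (E *v u)\<bar> \<le> real CARD('d) * real CARD('d) * norm E * (norm u)\<^sup>2"
proof -
  have entries: "\<bar>E $ i $ j\<bar> \<le> norm E" for i j
    by (rule order_trans[OF component_le_norm_cart[of "E $ i" j] Finite_Cartesian_Product.norm_nth_le])
  have "\<bar>u \<bullet> (E *v u)\<bar> \<le> norm u * norm (E *v u)" by (rule Cauchy_Schwarz_ineq2)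
  also have "norm (E *v u) \<le> onorm ((*v) E) * norm u" by (rule onorm) simp
  also have "onorm ((*v) E) \<le> real CARD('d) * real CARD('d) * norm E"
    by (rule onorm_le_matrix_component) (rule entries)
  finally show ?thesis
    by (simp add: power2_eq_square mult_left_mono mult_right_mono mult.assoc mult.left_commute)
qed

lemma pos_def_quadratic_form_lower_bound:
  fixes B :: "real^'d^'d"
  assumes "pos_def B"
  obtains m where "0 < m" "\<And>u. norm u = 1 \<Longrightarrow> m \<le> u \<bullet> (B *v u)"
proof -
  have "sphere (0::real^'d) 1 \<noteq> {}" by simp
  moreover have "continuous_on (sphere 0 1) (\<lambda>u. u \<bullet> (B *v u))" by (intro continuous_intros)
  ultimately obtain v where "v \<in> sphere 0 1" and min: "\<forall>u\<in>sphere 0 1. v \<bullet> (B *v v) \<le> u \<bullet> (B *v u)"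
    using continuous_attains_inf[OF compact_sphere] by blast
  then have "v \<noteq> 0" by auto
  then have "0 < v \<bullet> (B *v v)" using assms by (simp add: pos_def_def)
  with min that show ?thesis by auto
qed

lemma eigenvalues_near_pos_def:
  fixes B :: "real^'d^'d"
  assumes "pos_def B"
  obtains \<delta> m M where "0 < \<delta>" "0 < m"
    "\<And>U a k. orthogonal_matrix U \<Longrightarrow> norm (U ** diag_mat a ** transpose U - B) < \<delta> \<Longrightarrow> a k \<in> {m..M}"
proof -
  obtain m where m: "0 < m" "\<And>u. norm u = 1 \<Longrightarrow> m \<le> u \<bullet> (B *v u)"
    using pos_def_quadratic_form_lower_bound[OF assms] by blast
  define c where "c = real CARD('d) * real CARD('d)"
  have "c > 0" unfolding c_def by simp
  have "a k \<in> {m / 2 .. c * norm B + m / 2}"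
    if U: "orthogonal_matrix U" and close: "norm (U ** diag_mat a ** transpose U - B) < m / (2 * c)"
    for U a k
  proof -
    define A where "A = U ** diag_mat a ** transpose U"
    define u where "u = column k U"
    have u: "norm u = 1" "a k = u \<bullet> (A *v u)"
      using orthogonal_diag_eigenvalue[OF U A_def] unfolding u_def by auto
    have "u \<bullet> (A *v u) = u \<bullet> (B *v u) + u \<bullet> ((A - B) *v u)"
      by (simp add: matrix_vector_mult_diff_rdistrib inner_diff_right)
    moreover have "\<bar>u \<bullet> ((A - B) *v u)\<bar> < m / 2"
      using quadratic_form_bound[of u "A - B"] close \<open>c > 0\<close> u(1)
      unfolding A_def c_def by (simp add: field_simps)
    moreover have "u \<bullet> (B *v u) \<le> c * norm B"
      using quadratic_form_bound[of u B] u(1) unfolding c_def by simp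
    ultimately show ?thesis using m(2)[OF u(1)] u(2) by auto
  qed
  moreover have "0 < m / (2 * c)" "0 < m / 2" using m(1) \<open>c > 0\<close> by simp_all
  ultimately show ?thesis using that by blast
qed

lemma norm_mat_fun_diff_le:
  fixes U :: "real^'d^'d"
  assumes U: "orthogonal_matrix U" "A = U ** diag_mat a ** transpose U"
    and approx: "\<And>k. \<bar>g (a k) - p (a k)\<bar> \<le> \<epsilon>"
  shows "norm (mat_fun g A - mat_fun p A) \<le> real CARD('d) * \<epsilon>"
proof -
  have "diag_mat (\<lambda>k. g (a k) - p (a k)) = diag_mat (\<lambda>k. g (a k)) - diag_mat (\<lambda>k. p (a k))"
    by (simp add: diag_mat_def vec_eq_iff)
  then have "mat_fun g A - mat_fun p A = U ** diag_mat (\<lambda>k. g (a k) - p (a k)) ** transpose U"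
    unfolding mat_fun_eq_diag[OF U] by (simp add: matrix_diff_ldistrib matrix_diff_rdistrib)
  then have "norm (mat_fun g A - mat_fun p A) \<le> (\<Sum>k\<in>UNIV. \<bar>g (a k) - p (a k)\<bar>)"
    using norm_orthogonal_conj[OF U(1)] norm_diag_mat_le by metis
  also have "\<dots> \<le> (\<Sum>k\<in>(UNIV::'d set). \<epsilon>)" by (intro sum_mono approx)
  finally show ?thesis by simp
qed

text \<open>Uniform polynomial approximation of \<open>g\<close> on an interval containing all eigenvalues of
  matrices near \<open>B\<close>.\<close>
lemma mat_fun_polynomial_approx:
  fixes B :: "real^'d^'d"
  assumes B: "pos_def B" and g: "continuous_on {0<..} g" and "0 < e"
  obtains p \<delta> where "real_polynomial_function p" "0 < \<delta>"
    "\<And>A. sym_mat A \<Longrightarrow> norm (A - B) < \<delta> \<Longrightarrow> dist (mat_fun g A) (mat_fun p A) \<le> e"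
proof -
  obtain \<delta> m M where \<delta>: "0 < \<delta>" "0 < m"
    and eig: "\<And>U a k. orthogonal_matrix U \<Longrightarrow> norm (U ** diag_mat a ** transpose U - B) < \<delta> \<Longrightarrow> a k \<in> {m..M}"
    using eigenvalues_near_pos_def[OF B] by blast
  define \<epsilon> where "\<epsilon> = e / real CARD('d)"
  have "continuous_on {m..M} g" using g by (rule continuous_on_subset) (use \<delta>(2) in auto)
  moreover have "0 < \<epsilon>" unfolding \<epsilon>_def using \<open>0 < e\<close> by simp
  ultimately obtain p where p: "real_polynomial_function p" "\<And>x. x \<in> {m..M} \<Longrightarrow> \<bar>g x - p x\<bar> < \<epsilon>"
    using Stone_Weierstrass_real_polynomial_function[of "{m..M}"] by blast
  have "dist (mat_fun g A) (mat_fun p A) \<le> e" if symA: "sym_mat A" and close: "norm (A - B) < \<delta>" for A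
  proof -
    obtain U a where U: "orthogonal_matrix U" "A = U ** diag_mat a ** transpose U"
      using sym_mat_diagonalization[OF symA] .
    then have "\<bar>g (a k) - p (a k)\<bar> \<le> \<epsilon>" for k using eig[of U a k] p(2) close by fastforce
    then have "norm (mat_fun g A - mat_fun p A) \<le> real CARD('d) * \<epsilon>"
      by (rule norm_mat_fun_diff_le[OF U])
    then show ?thesis unfolding \<epsilon>_def by (simp add: dist_norm)
  qed
  with p(1) \<delta>(1) that show ?thesis by blast
qed

lemma tendsto_mat_fun:
  fixes C :: "'a \<Rightarrow> real^'d^'d"
  assumes B: "pos_def B" and g: "continuous_on {0<..} g"
    and sym: "eventually (\<lambda>t. sym_mat (C t)) F" and C: "(C \<longlongrightarrow> B) F"
  shows "((\<lambda>t. mat_fun g (C t)) \<longlongrightarrow> mat_fun g B) F"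
proof (rule tendstoI)
  fix e :: real assume "e > 0"
  have symB: "sym_mat B" using B by (simp add: pos_def_def)
  obtain p \<delta> where p: "real_polynomial_function p" and "0 < \<delta>"
    and approx: "\<And>A. sym_mat A \<Longrightarrow> norm (A - B) < \<delta> \<Longrightarrow> dist (mat_fun g A) (mat_fun p A) \<le> e / 3"
    using mat_fun_polynomial_approx[OF B g, of "e / 3"] \<open>e > 0\<close> by auto
  have "eventually (\<lambda>t. norm (C t - B) < \<delta>) F"
    using tendstoD[OF C \<open>0 < \<delta>\<close>] by (simp add: dist_norm)
  moreover have "eventually (\<lambda>t. dist (mat_fun p (C t)) (mat_fun p B) < e / 3) F"
    using tendstoD[OF tendsto_mat_fun_polynomial[OF p symB sym C], of "e / 3"] \<open>e > 0\<close> by simp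
  ultimately show "eventually (\<lambda>t. dist (mat_fun g (C t)) (mat_fun g B) < e) F"
    using sym
  proof eventually_elim
    case (elim t)
    have "dist (mat_fun g (C t)) (mat_fun g B)
        \<le> dist (mat_fun g (C t)) (mat_fun p (C t)) + dist (mat_fun p (C t)) (mat_fun p B)
          + dist (mat_fun p B) (mat_fun g B)"
      using dist_triangle[of "mat_fun g (C t)" "mat_fun g B" "mat_fun p (C t)"]
        dist_triangle[of "mat_fun p (C t)" "mat_fun g B" "mat_fun p B"] by linarith
    also have "\<dots> < e"
      using approx[of "C t"] approx[OF symB] elim \<open>0 < \<delta>\<close> by (simp add: dist_commute)
    finally show ?case .
  qed
qed

section \<open>The Daleckii--Krein formula\<close>

definition divided_diff :: "(real \<Rightarrow> real) \<Rightarrow> (real \<Rightarrow> real) \<Rightarrow> real \<Rightarrow> real \<Rightarrow> real" where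
  "divided_diff f f' a b = (if a = b then f' a else (f a - f b) / (a - b))"

lemma divided_diff_mult: "f a - f b = divided_diff f f' a b * (a - b)"
  by (simp add: divided_diff_def)

lemma continuous_on_divided_diff:
  assumes "\<And>x. x \<in> S \<Longrightarrow> (f has_real_derivative f' x) (at x)"
  shows "continuous_on S (\<lambda>a. divided_diff f f' a b)"
proof (rule continuous_at_imp_continuous_on, rule ballI)
  fix a assume "a \<in> S"
  show "isCont (\<lambda>a. divided_diff f f' a b) a"
  proof (cases "a = b")
    case False
    have "isCont (\<lambda>y. (f y - f b) / (y - b)) a"
      using DERIV_isCont[OF assms[OF \<open>a \<in> S\<close>]] False by (intro continuous_intros) auto
    moreover have "eventually (\<lambda>y. y \<in> - {b}) (nhds a)"
      using False by (intro eventually_nhds_in_open) auto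
    then have "eventually (\<lambda>y. (f y - f b) / (y - b) = divided_diff f f' y b) (nhds a)"
      by eventually_elim (auto simp: divided_diff_def)
    ultimately show ?thesis by (simp add: isCont_cong)
  next
    case True
    have "((\<lambda>y. (f y - f b) / (y - b)) \<longlongrightarrow> f' b) (at b)"
      using assms[OF \<open>a \<in> S\<close>] True by (simp add: has_field_derivative_iff)
    moreover have "eventually (\<lambda>y. (f y - f b) / (y - b) = divided_diff f f' y b) (at b)"
      by (auto simp: divided_diff_def eventually_at_filter)
    ultimately show ?thesis
      using True by (simp add: isCont_def divided_diff_def Lim_transform_eventually)
  qed
qed

definition eigenproj :: "real^'d^'d \<Rightarrow> 'd \<Rightarrow> real^'d^'d" where
  "eigenproj Q j = Q ** diag_mat (\<lambda>k. if k = j then 1 else 0) ** transpose Q"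

lemma conj_sum_mat_fun_eigenproj:
  fixes U V X :: "real^'d^'d"
  assumes U: "orthogonal_matrix U" "A = U ** diag_mat a ** transpose U" and V: "orthogonal_matrix V"
  shows "transpose U ** (\<Sum>j\<in>UNIV. mat_fun (\<lambda>x. K x (b j)) A ** X ** eigenproj V j) ** V
     = (\<chi> i l. K (a i) (b l) * (transpose U ** X ** V) $ i $ l)"
proof -
  have "transpose U ** (mat_fun (\<lambda>x. K x (b j)) A ** X ** eigenproj V j) ** V
     = diag_mat (\<lambda>i. K (a i) (b j)) ** (transpose U ** X ** V) ** diag_mat (\<lambda>k. if k = j then 1 else 0)"
    for j
    unfolding mat_fun_eq_diag[OF U] eigenproj_def using U(1) V
    by (simp add: matrix_mul_assoc orthogonal_matrixD orthogonal_matrix_cancel)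
  then have "(transpose U ** (\<Sum>j\<in>UNIV. mat_fun (\<lambda>x. K x (b j)) A ** X ** eigenproj V j) ** V) $ i $ l
      = (\<Sum>j\<in>UNIV. if l = j then K (a i) (b l) * (transpose U ** X ** V) $ i $ l else 0)" for i l
    unfolding matrix_sum_ldistrib matrix_sum_rdistrib sum_component diag_mat_mult_left diag_mat_mult_right
    by (intro sum.cong) auto
  then show ?thesis by (simp add: vec_eq_iff)
qed

lemma mat_fun_diff_eq_sum:
  fixes A V :: "real^'d^'d"
  assumes "sym_mat A" and V: "orthogonal_matrix V" "B = V ** diag_mat b ** transpose V"
  shows "mat_fun f A - mat_fun f B
    = (\<Sum>j\<in>UNIV. mat_fun (\<lambda>x. divided_diff f f' x (b j)) A ** (A - B) ** eigenproj V j)"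
proof -
  obtain U a where U: "orthogonal_matrix U" "A = U ** diag_mat a ** transpose U"
    using sym_mat_diagonalization[OF assms(1)] .
  define W where "W = transpose U ** V"
  have "transpose U ** (U ** diag_mat d ** transpose U) ** V = diag_mat d ** W" for d
    unfolding W_def using U(1) by (simp add: matrix_mul_assoc orthogonal_matrixD)
  moreover have "transpose U ** (V ** diag_mat e ** transpose V) ** V = W ** diag_mat e" for e
    unfolding W_def using V(1) by (simp add: matrix_mul_assoc orthogonal_matrix_cancel)
  ultimately have conj_diff:
    "transpose U ** (U ** diag_mat d ** transpose U - V ** diag_mat e ** transpose V) ** V
      = (\<chi> i l. (d i - e l) * W $ i $ l)" for d e
    unfolding matrix_diff_ldistrib matrix_diff_rdistrib
    by (simp add: diag_mat_mult_left diag_mat_mult_right vec_eq_iff algebra_simps)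
  have "transpose U ** (mat_fun f A - mat_fun f B) ** V = (\<chi> i l. (f (a i) - f (b l)) * W $ i $ l)"
    unfolding mat_fun_eq_diag[OF U] mat_fun_eq_diag[OF V] by (rule conj_diff)
  also have "\<dots> = (\<chi> i l. divided_diff f f' (a i) (b l) * (transpose U ** (A - B) ** V) $ i $ l)"
    unfolding U(2) V(2) conj_diff by (simp add: divided_diff_mult[of f _ _ f'] mult.assoc)
  also have "\<dots> = transpose U
      ** (\<Sum>j\<in>UNIV. mat_fun (\<lambda>x. divided_diff f f' x (b j)) A ** (A - B) ** eigenproj V j) ** V"
    by (rule conj_sum_mat_fun_eigenproj[OF U V(1), symmetric])
  finally show ?thesis by (rule orthogonal_conj_cancel[OF U(1) V(1)])
qed

lemma sum_mat_fun_eigenproj_eq_schur_mult: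
  fixes V X :: "real^'d^'d"
  assumes V: "orthogonal_matrix V" "B = V ** diag_mat b ** transpose V"
  shows "(\<Sum>j\<in>UNIV. mat_fun (\<lambda>x. K x (b j)) B ** X ** eigenproj V j) = schur_mult K V b X"
  by (rule orthogonal_conj_cancel[OF V(1) V(1)])
    (simp only: conj_sum_mat_fun_eigenproj[OF V V(1)] schur_mult_conj[OF V(1)])

lemma has_vector_derivative_iff_difference_quotient:
  fixes \<phi> :: "real \<Rightarrow> 'a::real_normed_vector"
  shows "(\<phi> has_vector_derivative L) (at s) \<longleftrightarrow> ((\<lambda>t. (\<phi> t - \<phi> s) /\<^sub>R (t - s)) \<longlongrightarrow> L) (at s)"
proof -
  have "eventually (\<lambda>t. norm (\<phi> t - \<phi> s - (t - s) *\<^sub>R L) / norm (t - s)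
      = norm ((\<phi> t - \<phi> s) /\<^sub>R (t - s) - L)) (at s)"
  proof (rule eventually_at_filter[THEN iffD2, OF always_eventually], intro allI impI)
    fix t assume "t \<noteq> s"
    then have "(\<phi> t - \<phi> s) /\<^sub>R (t - s) - L = (1 / (t - s)) *\<^sub>R (\<phi> t - \<phi> s - (t - s) *\<^sub>R L)"
      by (simp add: scaleR_diff_right inverse_eq_divide)
    then show "norm (\<phi> t - \<phi> s - (t - s) *\<^sub>R L) / norm (t - s) = norm ((\<phi> t - \<phi> s) /\<^sub>R (t - s) - L)"
      by simp
  qed
  then have "(\<phi> has_vector_derivative L) (at s)
      \<longleftrightarrow> ((\<lambda>t. norm ((\<phi> t - \<phi> s) /\<^sub>R (t - s) - L)) \<longlongrightarrow> 0) (at s)"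
    unfolding has_vector_derivative_def has_derivative_iff_norm
    by (simp add: bounded_linear_scaleR_left tendsto_cong)
  also have "\<dots> \<longleftrightarrow> ((\<lambda>t. (\<phi> t - \<phi> s) /\<^sub>R (t - s)) \<longlongrightarrow> L) (at s)"
    by (simp add: tendsto_norm_zero_iff LIM_zero_iff)
  finally show ?thesis .
qed

text \<open>The difference quotient is rewritten with \<open>mat_fun_diff_eq_sum\<close>, whose right-hand side
  is continuous in \<open>\<gamma> t\<close>.\<close>
lemma has_vector_derivative_mat_fun:
  fixes \<gamma> :: "real \<Rightarrow> real^'d^'d" and V :: "real^'d^'d"
  assumes \<gamma>: "(\<gamma> has_vector_derivative D) (at s)" and sym: "eventually (\<lambda>t. sym_mat (\<gamma> t)) (at s)"
    and pd: "pos_def (\<gamma> s)" and V: "orthogonal_matrix V" "\<gamma> s = V ** diag_mat b ** transpose V"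
    and f: "\<And>a. 0 < a \<Longrightarrow> (f has_real_derivative f' a) (at a)"
  shows "((\<lambda>t. mat_fun f (\<gamma> t)) has_vector_derivative schur_mult (divided_diff f f') V b D) (at s)"
proof -
  let ?dd = "divided_diff f f'"
  have "(\<gamma> \<longlongrightarrow> \<gamma> s) (at s)"
    using has_vector_derivative_continuous[OF \<gamma>] by (simp add: continuous_at)
  then have "((\<lambda>t. mat_fun (\<lambda>x. ?dd x (b j)) (\<gamma> t)) \<longlongrightarrow> mat_fun (\<lambda>x. ?dd x (b j)) (\<gamma> s)) (at s)" for j
    using tendsto_mat_fun[OF pd continuous_on_divided_diff sym] f by auto
  moreover have "((\<lambda>t. (\<gamma> t - \<gamma> s) /\<^sub>R (t - s)) \<longlongrightarrow> D) (at s)"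
    using \<gamma> by (simp add: has_vector_derivative_iff_difference_quotient)
  ultimately have "((\<lambda>t. \<Sum>j\<in>UNIV. mat_fun (\<lambda>x. ?dd x (b j)) (\<gamma> t) ** ((\<gamma> t - \<gamma> s) /\<^sub>R (t - s))
      ** eigenproj V j) \<longlongrightarrow> schur_mult ?dd V b D) (at s)"
    unfolding sum_mat_fun_eigenproj_eq_schur_mult[OF V, symmetric]
    by (intro tendsto_sum tendsto_matrix_mult tendsto_const) auto
  moreover have "eventually (\<lambda>t. (\<Sum>j\<in>UNIV. mat_fun (\<lambda>x. ?dd x (b j)) (\<gamma> t)
      ** ((\<gamma> t - \<gamma> s) /\<^sub>R (t - s)) ** eigenproj V j)
      = (mat_fun f (\<gamma> t) - mat_fun f (\<gamma> s)) /\<^sub>R (t - s)) (at s)"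
    using sym
  proof eventually_elim
    case (elim t)
    then show ?case
      unfolding mat_fun_diff_eq_sum[OF elim V, of f f']
      by (simp add: scaleR_sum_right matrix_scaleR_right scalar_matrix_assoc)
  qed
  ultimately show ?thesis
    unfolding has_vector_derivative_iff_difference_quotient by (rule Lim_transform_eventually)
qed

lemma partial_mat_fun:
  fixes B :: "real^'n \<Rightarrow> real^'d^'d" and V :: "real^'d^'d"
  assumes "open \<Omega>" "x \<in> \<Omega>" "\<forall>y\<in>\<Omega>. sym_mat (B y)" "pos_def (B x)" "B differentiable (at x)"
    and f: "\<And>a. 0 < a \<Longrightarrow> (f has_real_derivative f' a) (at a)"
    and V: "orthogonal_matrix V" "B x = V ** diag_mat b ** transpose V"
  shows "partial k (\<lambda>y. mat_fun f (B y)) x = schur_mult (divided_diff f f') V b (partial k B x)"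
proof -
  define \<gamma> where "\<gamma> t = B (x + t *\<^sub>R axis k 1)" for t
  have "(B \<circ> (\<lambda>t. x + t *\<^sub>R axis k 1)) differentiable (at 0)"
    using assms(5) by (intro differentiable_chain_at derivative_intros) simp
  then have deriv: "(\<gamma> has_vector_derivative partial k B x) (at 0)"
    unfolding partial_def \<gamma>_def o_def by (simp add: vector_derivative_works[symmetric])
  moreover have "((\<lambda>t. x + t *\<^sub>R axis k 1) \<longlongrightarrow> x) (at (0::real))"
    by (intro tendsto_eq_intros) auto
  then have "eventually (\<lambda>t. x + t *\<^sub>R axis k 1 \<in> \<Omega>) (at (0::real))"
    using assms(1,2) by (rule topological_tendstoD)
  then have "eventually (\<lambda>t. sym_mat (\<gamma> t)) (at 0)"
    by eventually_elim (use assms(3) in \<open>simp add: \<gamma>_def\<close>)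
  moreover have "pos_def (\<gamma> 0)" "\<gamma> 0 = V ** diag_mat b ** transpose V"
    using assms(4) V(2) by (simp_all add: \<gamma>_def)
  ultimately have "((\<lambda>t. mat_fun f (\<gamma> t)) has_vector_derivative
      schur_mult (divided_diff f f') V b (partial k B x)) (at 0)"
    using has_vector_derivative_mat_fun[OF deriv _ _ V(1) _ f] by blast
  then show ?thesis unfolding partial_def \<gamma>_def by (rule vector_derivative_at)
qed

section \<open>Divided differences of powers\<close>

abbreviation powr_diff :: "real \<Rightarrow> real \<Rightarrow> real \<Rightarrow> real" where
  "powr_diff t \<equiv> divided_diff (\<lambda>x. x powr t) (\<lambda>x. t * x powr (t - 1))"

lemma powr_diff_eq_sinh:
  fixes a b t :: real
  assumes "0 < a" "0 < b"
  shows "a powr t - b powr t = 2 * exp (t * ((ln a + ln b) / 2)) * sinh (t * ((ln a - ln b) / 2))"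
proof -
  define \<mu> where "\<mu> = (ln a + ln b) / 2"
  define z where "z = (ln a - ln b) / 2"
  have "t * ln a = t * \<mu> + t * z" "t * ln b = t * \<mu> + - (t * z)"
    unfolding \<mu>_def z_def by (simp_all add: field_simps)
  then have "a powr t - b powr t = exp (t * \<mu>) * exp (t * z) - exp (t * \<mu>) * exp (- (t * z))"
    using assms by (simp add: powr_def exp_add exp_diff exp_minus divide_inverse)
  also have "\<dots> = 2 * exp (t * \<mu>) * sinh (t * z)"
    by (simp add: sinh_field_def field_simps)
  finally show ?thesis unfolding \<mu>_def z_def .
qed

lemma powr_diff_sinh_ratio:
  fixes a b r :: real
  assumes a: "0 < a" and b: "0 < b" and r: "r \<noteq> -1"
  shows "powr_diff r a b = sinh_ratio r ((ln a - ln b) / 2) * (powr_diff ((r + 1) / 2) a b)\<^sup>2"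
proof (cases "a = b")
  case True
  have "((r + 1) / 2 - 1) + ((r + 1) / 2 - 1) = r - 1" by (simp add: field_simps)
  then have "(a powr ((r + 1) / 2 - 1))\<^sup>2 = a powr (r - 1)"
    by (simp only: power2_eq_square powr_add[symmetric])
  moreover have "(r + 1)\<^sup>2 \<noteq> 0" using r by (simp add: add_eq_0_iff)
  then have "4 * r / (r + 1)\<^sup>2 * ((r + 1) / 2)\<^sup>2 = r" by (simp add: power_divide)
  ultimately have "4 * r / (r + 1)\<^sup>2 * ((r + 1) / 2 * a powr ((r + 1) / 2 - 1))\<^sup>2 = r * a powr (r - 1)"
    by (simp only: power_mult_distrib mult.assoc[symmetric])
  then show ?thesis using True by (simp add: divided_diff_def sinh_ratio_def)
next
  case False
  define s where "s = (r + 1) / 2"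
  define \<mu> where "\<mu> = (ln a + ln b) / 2"
  define z where "z = (ln a - ln b) / 2"
  have "z \<noteq> 0" unfolding z_def using False a b by simp
  moreover have "s \<noteq> 0" unfolding s_def using r by simp
  ultimately have "sinh (s * z) \<noteq> 0" by simp
  have diff: "a powr t - b powr t = 2 * exp (t * \<mu>) * sinh (t * z)" for t
    unfolding \<mu>_def z_def by (rule powr_diff_eq_sinh[OF a b])
  have "exp (s * \<mu>) * exp (s * \<mu>) = exp (r * \<mu>) * exp \<mu>"
    unfolding exp_add[symmetric] s_def by (simp add: field_simps)
  then have "sinh (r * z) * sinh z / (sinh (s * z))\<^sup>2 * (2 * exp (s * \<mu>) * sinh (s * z) / (a - b))\<^sup>2
      = (2 * exp (r * \<mu>) * sinh (r * z)) * (2 * exp \<mu> * sinh z) / (a - b)\<^sup>2"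
    using \<open>sinh (s * z) \<noteq> 0\<close> False by (simp add: field_simps power2_eq_square)
  also have "\<dots> = (a powr r - b powr r) / (a - b)"
    using diff[of r] diff[of 1] a b False by (simp add: power2_eq_square)
  finally show ?thesis
    using False \<open>z \<noteq> 0\<close> diff[of s] unfolding divided_diff_def sinh_ratio_def s_def z_def by simp
qed

lemma frob_schur_mult_powr_diff:
  fixes V X :: "real^'d^'d"
  assumes V: "orthogonal_matrix V" and b: "\<And>j. 0 < b j" and r: "r \<noteq> -1"
  shows "schur_mult (powr_diff r) V b X \<cdot>\<^sub>F X
    = schur_mult (\<lambda>a c. sinh_ratio r ((ln a - ln c) / 2)) V b (schur_mult (powr_diff ((r + 1) / 2)) V b X)
      \<cdot>\<^sub>F schur_mult (powr_diff ((r + 1) / 2)) V b X"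
    (is "_ = schur_mult ?S V b (schur_mult ?P V b X) \<cdot>\<^sub>F _")
proof -
  let ?Z = "transpose V ** X ** V"
  have "schur_mult (powr_diff r) V b X \<cdot>\<^sub>F X
      = schur_mult (powr_diff r) V b X \<cdot>\<^sub>F schur_mult (\<lambda>_ _. 1) V b X"
    by (simp only: schur_mult_one[OF V])
  also have "\<dots> = (\<Sum>i\<in>UNIV. \<Sum>j\<in>UNIV. powr_diff r (b i) (b j) * 1 * (?Z $ i $ j)\<^sup>2)"
    by (rule frob_schur_mult[OF V])
  also have "\<dots> = (\<Sum>i\<in>UNIV. \<Sum>j\<in>UNIV. ?S (b i) (b j) * ?P (b i) (b j) * ?P (b i) (b j) * (?Z $ i $ j)\<^sup>2)"
    using powr_diff_sinh_ratio[OF b b r] by (simp add: power2_eq_square mult.assoc)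
  also have "\<dots> = schur_mult (\<lambda>a c. ?S a c * ?P a c) V b X \<cdot>\<^sub>F schur_mult ?P V b X"
    by (rule frob_schur_mult[OF V, symmetric])
  finally show ?thesis by (simp only: schur_mult_schur_mult[OF V])
qed

theorem mainTheorem11:
  fixes \<Omega> :: "(real ^ 'n) set" and B :: "real ^ 'n \<Rightarrow> real ^ 'd ^ 'd" and r :: real
  assumes "open \<Omega>"
    and "smooth_on \<Omega> B"
    and "\<forall>x\<in>\<Omega>. pos_def (B x)"
    and "r \<noteq> -1"
  shows "\<forall>x\<in>\<Omega>. grad_dot (\<lambda>y. mat_pow r (B y)) B x =
     (\<Sum>k\<in>UNIV. ad_fun (sinh_ratio r) (mat_log (B x)) (partial k (\<lambda>y. mat_pow ((r + 1) / 2) (B y)) x)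
        \<cdot>\<^sub>F partial k (\<lambda>y. mat_pow ((r + 1) / 2) (B y)) x)"
proof
  fix x assume "x \<in> \<Omega>"
  then have pd: "pos_def (B x)" using assms(3) by simp
  then obtain V b where V: "orthogonal_matrix V" "B x = V ** diag_mat b ** transpose V"
    using sym_mat_diagonalization by (auto simp: pos_def_def)
  have b: "0 < b j" for j using pos_def_eigenvalue_pos[OF pd V] .
  have "\<forall>y\<in>\<Omega>. foldr partial [] B differentiable (at y)"
    using assms(2) unfolding smooth_on_def by blast
  then have "B differentiable (at x)" using \<open>x \<in> \<Omega>\<close> by simp
  moreover have "\<forall>y\<in>\<Omega>. sym_mat (B y)" using assms(3) by (simp add: pos_def_def)
  ultimately have partial_pow:
    "partial k (\<lambda>y. mat_pow t (B y)) x = schur_mult (powr_diff t) V b (partial k B x)" for k t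
    unfolding mat_pow_def
    by (intro partial_mat_fun[where B = B and x = x, OF assms(1) \<open>x \<in> \<Omega>\<close> _ pd _ _ V] has_real_derivative_powr)
  show "grad_dot (\<lambda>y. mat_pow r (B y)) B x =
     (\<Sum>k\<in>UNIV. ad_fun (sinh_ratio r) (mat_log (B x)) (partial k (\<lambda>y. mat_pow ((r + 1) / 2) (B y)) x)
        \<cdot>\<^sub>F partial k (\<lambda>y. mat_pow ((r + 1) / 2) (B y)) x)"
    unfolding grad_dot_def partial_pow ad_fun_mat_log[OF V] frob_schur_mult_powr_diff[OF V(1) b assms(4)] ..
qed

end
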